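(* For $k\in\mathbb{N}$ let $B(k)=\dfrac{2}{3}\cdot\dfrac{k-1}{(2k+1)!}$. (i) For every $x\in(0,\pi/2)$ and every $n\in\mathbb{N}$, $$\sum_{k=2}^{2n}(-1)^{k+1}B(k)\,x^{2k}<\frac{\sin x}{x}-\frac{\cos x+2}{3}<\sum_{k=2}^{2n+1}(-1)^{k+1}B(k)\,x^{2k}.$$ (ii) For every $x\in(0,\pi/2)$ and every $m\in\mathbb{N}$, $$\Big|\frac{\sin x}{x}-\frac{\cos x+2}{3}-\sum_{k=2}^{m}(-1)^{k+1}B(k)\,x^{2k}\Big|<B(m+1)\,x^{2m+2},$$ where the sum is empty (equal to $0$) when $m=1$.
   Context: $\mathbb{N}=\{1,2,3,\dots\}$. *)

theory Defs
  imports Complex_Main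
begin

definition B :: "nat \<Rightarrow> real" where
  "B k = (2/3) * ((real k - 1) / fact (2*k+1))"

end

(* Subtracting the Maclaurin series of cos x / 3 from that of sin x / x gives
   (cos x + 2)/3 - sin x / x = \<Sum>k\<ge>2. (-1)^k B(k) x^(2k), because
   1/(3 (2k)!) - 1/(2k+1)! = B(k) and the terms k = 0, 1 are -2/3 and 0.
   For |x| \<le> 2 the terms B(k) x^(2k) decrease strictly from k = 2 on, so by the
   strict Leibniz estimate every remainder of this alternating series has the sign
   of its first term and is smaller than it in absolute value. Both parts of the
   theorem are this estimate, read off for even and odd m. *)
theory Submission
  imports Defs
begin

lemma alternating_sums_pos:
  fixes d :: "nat \<Rightarrow> real"
  assumes sums: "(\<lambda>i. (-1)^i * d i) sums S" and dec: "\<And>i. d (Suc i) < d i"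
  shows "0 < S"
proof -
  have pair: "(\<Sum>i=n*2..<n*2+2. (-1)^i * d i) = d (2*n) - d (Suc (2*n))" for n
  proof -
    have "(-1::real)^(n+n) = 1" by (simp flip: mult_2)
    then show ?thesis by (simp add: numeral_2_eq_2 mult.commute)
  qed
  have "(\<lambda>n. \<Sum>i=n*2..<n*2+2. (-1)^i * d i) sums S"
    using sums_group[OF sums, of 2] by simp
  then have pairs: "(\<lambda>n. d (2*n) - d (Suc (2*n))) sums S"
    unfolding pair .
  have "0 < (\<Sum>n. d (2*n) - d (Suc (2*n)))"
    using dec by (intro suminf_pos sums_summable[OF pairs]) (simp add: less_imp_le)
  then show ?thesis
    using sums_unique[OF pairs] by simp
qed

lemma alternating_sums_bounds:
  fixes d :: "nat \<Rightarrow> real"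
  assumes sums: "(\<lambda>i. (-1)^i * d i) sums S" and dec: "\<And>i. d (Suc i) < d i"
  shows "0 < S \<and> S < d 0"
proof -
  have "(\<lambda>i. (-1)^Suc i * d (Suc i)) sums (S - d 0)"
    using sums_iff_shift[of "\<lambda>i. (-1)^i * d i" 1] sums by simp
  then have "(\<lambda>i. (-1)^i * d (Suc i)) sums (d 0 - S)"
    using sums_minus by fastforce
  then have "0 < d 0 - S"
    using dec by (rule alternating_sums_pos)
  with alternating_sums_pos[OF sums dec] show ?thesis by simp
qed

lemma alternating_sums_remainder_bounds:
  fixes d :: "nat \<Rightarrow> real"
  assumes sums: "(\<lambda>i. (-1)^i * d i) sums S" and dec: "\<And>i. N \<le> i \<Longrightarrow> d (Suc i) < d i"
  defines "R \<equiv> (-1)^N * (S - (\<Sum>i<N. (-1)^i * d i))"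
  shows "0 < R \<and> R < d N"
proof -
  have "(\<lambda>i. (-1)^(i+N) * d (i+N)) sums (S - (\<Sum>i<N. (-1)^i * d i))"
    using sums_iff_shift[of "\<lambda>i. (-1)^i * d i" N] sums by simp
  then have "(\<lambda>i. (-1)^N * ((-1)^(i+N) * d (i+N))) sums R"
    unfolding R_def by (rule sums_mult)
  moreover have "(-1)^N * ((-1)^(i+N) * d (i+N)) = (-1)^i * d (i+N)" for i :: nat
    by (simp add: power_add)
  ultimately have "(\<lambda>i. (-1)^i * d (i+N)) sums R"
    by simp
  from alternating_sums_bounds[OF this] dec show ?thesis by simp
qed

lemma fact_odd: "fact (2*k+1) = (2 * real k + 1) * fact (2*k)"
  using fact_Suc[of "2*k", where 'a=real] by simp

lemma B_eq_cos_coeff_minus_sin_coeff: "B k = 1 / (3 * fact (2*k)) - 1 / fact (2*k+1)"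
proof -
  define F :: real where "F = fact (2*k)"
  have pos: "F > 0" "2 * real k + 1 > 0"
    by (simp_all add: F_def)
  have "B k = (2/3) * ((real k - 1) / ((2 * real k + 1) * F))"
    unfolding B_def fact_odd F_def ..
  also have "\<dots> = 1 / (3 * F) - 1 / ((2 * real k + 1) * F)"
    using pos by (simp add: divide_simps)
  finally show ?thesis
    unfolding fact_odd F_def .
qed

lemma cos_div_3_minus_sin_div_sums:
  fixes x :: real
  assumes "x \<noteq> 0"
  shows "(\<lambda>k. (-1)^k * (B k * x^(2*k))) sums (cos x / 3 - sin x / x)"
proof -
  have "(\<lambda>k. (-1)^k / fact (2*k) * x^(2*k) / 3 - (-1)^k / fact (2*k+1) * x^(2*k+1) / x)
          sums (cos x / 3 - sin x / x)"
    by (intro sums_diff sums_divide cos_paired sin_paired)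
  moreover have "(-1)^k / fact (2*k) * x^(2*k) / 3 - (-1)^k / fact (2*k+1) * x^(2*k+1) / x
                   = (-1)^k * (B k * x^(2*k))" for k
  proof -
    have "x^(2*k+1) / x = x^(2*k)"
      using assms by simp
    then show ?thesis
      unfolding B_eq_cos_coeff_minus_sin_coeff using assms
      by (simp add: divide_simps del: fact_Suc) (simp add: algebra_simps)
  qed
  ultimately show ?thesis by simp
qed

lemma B_Suc:
  assumes "2 \<le> k"
  shows "B (Suc k) = B k * (real k / ((real k - 1) * (2 * real k + 2) * (2 * real k + 3)))"
proof -
  define F :: real where "F = fact (2*k+1)"
  have pos: "F > 0" "2 * real k + 2 > 0" "2 * real k + 3 > 0" "real k - 1 > 0"
    using assms by (simp_all add: F_def)
  have "fact (2 * Suc k + 1) = (2 * real k + 3) * (2 * real k + 2) * F"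
    using fact_odd[of "Suc k"] fact_Suc[of "2*k+1", where 'a=real]
    by (simp add: F_def algebra_simps)
  then show ?thesis
    unfolding B_def F_def[symmetric] using pos by (simp add: divide_simps) (simp add: algebra_simps)
qed

lemma B_pos: "2 \<le> k \<Longrightarrow> 0 < B k"
  by (simp add: B_def)

lemma B_term_decreasing:
  fixes x :: real
  assumes "x \<noteq> 0" "\<bar>x\<bar> \<le> 2" "2 \<le> k"
  shows "B (Suc k) * x^(2 * Suc k) < B k * x^(2*k)"
proof -
  define r where "r = real k * x^2 / ((real k - 1) * (2 * real k + 2) * (2 * real k + 3))"
  have "x^2 \<le> 2^2"
    using assms(2) by (metis abs_le_square_iff abs_numeral)
  then have "real k * x^2 \<le> real k * 4"
    by (intro mult_left_mono) auto
  also have "\<dots> < (real k - 1) * (2 * real k + 2) * (2 * real k + 3)"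
  proof -
    have k: "2 \<le> real k"
      using assms(3) by simp
    then have "2 * real k \<le> real k * real k" "0 \<le> real k * real k * real k"
      by (simp_all add: mult_right_mono)
    with k have "4 * real k + 4 * real k < 6 * (real k * real k) + 4 * (real k * real k * real k) - 6"
      by linarith
    then show ?thesis
      by (simp add: algebra_simps)
  qed
  finally have "r < 1"
    unfolding r_def using assms(3) by (simp add: divide_less_eq)
  moreover have "0 < B k * x^(2*k)"
    using assms by (intro mult_pos_pos B_pos) (simp_all add: power_mult)
  moreover have "x^(2 * Suc k) = x^(2*k) * x^2"
    by (simp add: power2_eq_square)
  then have "B (Suc k) * x^(2 * Suc k) = B k * x^(2*k) * r"
    unfolding r_def B_Suc[OF assms(3)] by (simp add: ac_simps)
  ultimately show ?thesis
    by (metis mult.right_neutral mult_strict_left_mono)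
qed

lemma sum_atMost_split_first_two:
  fixes g :: "nat \<Rightarrow> real"
  assumes "1 \<le> m"
  shows "(\<Sum>k\<le>m. g k) = g 0 + g 1 + (\<Sum>k=2..m. g k)"
  using assms by (simp add: atMost_atLeast0 sum.atLeast_Suc_atMost numeral_2_eq_2)

lemma sin_div_minus_cos_remainder_bounds:
  fixes x :: real
  assumes "x \<noteq> 0" "\<bar>x\<bar> \<le> 2" "1 \<le> m"
  defines "S \<equiv> \<Sum>k=2..m. (-1)^(k+1) * B k * x^(2*k)"
  defines "R \<equiv> sin x / x - (cos x + 2)/3 - S"
  shows "0 < (-1)^m * R \<and> (-1)^m * R < B (m+1) * x^(2*m+2)"
proof -
  have "B 0 = - 2/3" "B 1 = 0"
    by (simp_all add: B_def)
  then have partial_sum: "(\<Sum>k\<le>m. (-1)^k * (B k * x^(2*k))) = -2/3 - S"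
    unfolding S_def using assms(3)
    by (simp add: sum_atMost_split_first_two sum_negf[symmetric] mult.assoc del: sum.atMost_Suc)
  have "(-1)^(m+1) * (cos x / 3 - sin x / x - (\<Sum>k<m+1. (-1)^k * (B k * x^(2*k)))) = (-1)^m * R"
    unfolding R_def lessThan_Suc_atMost[of m, unfolded Suc_eq_plus1] partial_sum
    by (simp add: field_simps)
  moreover have "B (m+1) * x^(2*(m+1)) = B (m+1) * x^(2*m+2)"
    by simp
  moreover have "B (Suc i) * x^(2 * Suc i) < B i * x^(2*i)" if "m+1 \<le> i" for i
    using B_term_decreasing[OF assms(1,2)] that assms(3) by simp
  then have "0 < (-1)^(m+1) * (cos x / 3 - sin x / x - (\<Sum>k<m+1. (-1)^k * (B k * x^(2*k))))
      \<and> (-1)^(m+1) * (cos x / 3 - sin x / x - (\<Sum>k<m+1. (-1)^k * (B k * x^(2*k))))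
          < B (m+1) * x^(2*(m+1))"
    by (rule alternating_sums_remainder_bounds[OF cos_div_3_minus_sin_div_sums[OF assms(1)]])
  ultimately show ?thesis
    by simp
qed

theorem theorem2:
  shows "(\<forall>x::real. \<forall>n::nat. 0 < x \<and> x < pi/2 \<and> n \<ge> 1 \<longrightarrow>
            (\<Sum>k=2..2*n. (-1)^(k+1) * B k * x^(2*k)) < sin x / x - (cos x + 2)/3
          \<and> sin x / x - (cos x + 2)/3 < (\<Sum>k=2..2*n+1. (-1)^(k+1) * B k * x^(2*k)))
       \<and> (\<forall>x::real. \<forall>m::nat. 0 < x \<and> x < pi/2 \<and> m \<ge> 1 \<longrightarrow>
            \<bar>sin x / x - (cos x + 2)/3 - (\<Sum>k=2..m. (-1)^(k+1) * B k * x^(2*k))\<bar>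
              < B (m+1) * x^(2*m+2))"
proof -
  have remainder: "0 < (-1)^m * (sin x / x - (cos x + 2)/3 - (\<Sum>k=2..m. (-1)^(k+1) * B k * x^(2*k)))
      \<and> (-1)^m * (sin x / x - (cos x + 2)/3 - (\<Sum>k=2..m. (-1)^(k+1) * B k * x^(2*k)))
          < B (m+1) * x^(2*m+2)"
    if "0 < x" "x < pi/2" "1 \<le> m" for x :: real and m :: nat
    using sin_div_minus_cos_remainder_bounds[of x m] that pi_less_4 by simp
  show ?thesis
  proof (intro conjI allI impI)
    fix x :: real and n :: nat
    assume "0 < x \<and> x < pi/2 \<and> n \<ge> 1"
    then show "(\<Sum>k=2..2*n. (-1)^(k+1) * B k * x^(2*k)) < sin x / x - (cos x + 2)/3"
      and "sin x / x - (cos x + 2)/3 < (\<Sum>k=2..2*n+1. (-1)^(k+1) * B k * x^(2*k))"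
      using remainder[of x "2*n"] remainder[of x "2*n+1"] by simp_all
  next
    fix x :: real and m :: nat
    assume "0 < x \<and> x < pi/2 \<and> m \<ge> 1"
    then show "\<bar>sin x / x - (cos x + 2)/3 - (\<Sum>k=2..m. (-1)^(k+1) * B k * x^(2*k))\<bar>
              < B (m+1) * x^(2*m+2)"
      using remainder[of x m] by (cases "even m") (simp_all add: abs_if)
  qed
qed

end
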